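(* Let $P_1,\dots,P_L\subset\mathbb{R}^N$ be finitely many polytopes. For each $j$, let $v^{(j)}(x)$ denote a vertex of $P_j$ closest to $x$ in Euclidean norm (with some fixed tie-breaking rule) and, for $\gamma\in P_j$, let $\phi^{(j)}_\gamma(x)=x+(\gamma-v^{(j)}(x))$. Then there exists a bounded convex set $Q_\infty\subset\mathbb{R}^N$ such that for each $j\in\{1,\dots,L\}$ there is $\rho_j>0$ with $\phi^{(j)}_\gamma(\rho Q_\infty)\subset\rho Q_\infty$ for all $\gamma\in P_j$ and all $\rho\ge\rho_j$.
   Context: $\rho Q_\infty=\{\rho q: q\in Q_\infty\}$. *)

theory Defs
  imports "HOL-Analysis.Analysis"
begin

text \<open>A choice of a vertex (extreme point) of P closest to each point x in Euclidean
  distance; any fixed tie-breaking rule gives such a function.\<close>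
definition closest_vertex_choice :: "'a::euclidean_space set \<Rightarrow> ('a \<Rightarrow> 'a) \<Rightarrow> bool" where
  "closest_vertex_choice P v \<longleftrightarrow>
     (\<forall>x. v x extreme_point_of P \<and> (\<forall>w. w extreme_point_of P \<longrightarrow> dist x (v x) \<le> dist x w))"

definition phi_map :: "('a::euclidean_space \<Rightarrow> 'a) \<Rightarrow> 'a \<Rightarrow> 'a \<Rightarrow> 'a" where
  "phi_map v \<gamma> x = x + (\<gamma> - v x)"

end

theory Submission
  imports Defs
begin

(* Every move x \<mapsto> x + (\<gamma> - v x) is a convex combination of the moves x \<mapsto> x + (w - v x),
  w a vertex, and because v x is a closest vertex, x \<bullet> (w - v x) \<le> (|w|^2 - |v x|^2) / 2 is
  bounded. So it suffices to make \<rho>Q closed under x \<mapsto> x + a, for the finitely many differences a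
  of vertices, whenever x \<bullet> a \<le> C. Take Q to be the unit ball with finitely many caps
  {y. n \<bullet> y > t n} cut off, enough (by compactness of the sphere) that Q lies strictly inside the
  ball; this leaves room for the bounded moves away from the cut planes. A point q of Q near the
  plane with normal n lies in a small cap around n, where q \<bullet> a \<ge> g > 0 for every a with
  n \<bullet> a > 0; then x = \<rho>q has x \<bullet> a \<ge> \<rho>g > C, so for large \<rho> no move pushes x across that
  plane. *)

lemma finite_pos_lower_bound:
  fixes f :: "'b \<Rightarrow> real"
  assumes "finite X" "\<And>x. x \<in> X \<Longrightarrow> 0 < f x"
  obtains m where "0 < m" "\<And>x. x \<in> X \<Longrightarrow> m \<le> f x"
proof
  show "0 < Min (insert 1 (f ` X))" using assms by simp
  show "Min (insert 1 (f ` X)) \<le> f x" if "x \<in> X" for x using assms that by simp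
qed

lemma eventually_less_mult_at_top:
  fixes e :: real
  assumes "0 < e"
  shows "\<forall>\<^sub>F \<rho> in at_top. a < \<rho> * e"
  using eventually_gt_at_top[of "a / e"] by eventually_elim (use assms in \<open>simp add: field_simps\<close>)

lemma eventually_at_top_pos_threshold:
  fixes P :: "real \<Rightarrow> bool"
  shows "eventually P at_top \<longleftrightarrow> (\<exists>N>0. \<forall>\<rho>\<ge>N. P \<rho>)"
proof
  assume "eventually P at_top"
  then obtain N where "\<forall>\<rho>\<ge>N. P \<rho>" unfolding eventually_at_top_linorder by blast
  then show "\<exists>N>0. \<forall>\<rho>\<ge>N. P \<rho>" by (intro exI[of _ "max N 1"]) auto
qed (auto simp: eventually_at_top_linorder)

lemma inner_pos_uniform_near:
  fixes A :: "'a::real_inner set"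
  assumes "finite A"
  obtains r g where "0 < r" "0 < g"
    "\<And>q a. norm (q - u) \<le> r \<Longrightarrow> a \<in> A \<Longrightarrow> 0 < u \<bullet> a \<Longrightarrow> g \<le> q \<bullet> a"
proof -
  obtain B where B: "0 < B" "\<And>a. a \<in> A \<Longrightarrow> norm a \<le> B"
    using finite_imp_bounded[OF assms] bounded_pos by metis
  obtain m where m: "0 < m" "\<And>a. a \<in> {a\<in>A. 0 < u \<bullet> a} \<Longrightarrow> m \<le> u \<bullet> a / 2"
    using finite_pos_lower_bound[of "{a\<in>A. 0 < u \<bullet> a}" "\<lambda>a. u \<bullet> a / 2"] assms by auto
  show ?thesis
  proof
    show "0 < m / B" "0 < m" using m B by auto
    fix q a assume q: "norm (q - u) \<le> m / B" and a: "a \<in> A" "0 < u \<bullet> a"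
    have "(u - q) \<bullet> a \<le> norm (q - u) * norm a"
      using norm_cauchy_schwarz[of "u - q" a] by (simp add: norm_minus_commute)
    also have "\<dots> \<le> m / B * B" using q B m a by (intro mult_mono) auto
    also have "\<dots> = m" using B by simp
    finally have "u \<bullet> a - m \<le> q \<bullet> a" by (simp add: inner_diff_left)
    then show "m \<le> q \<bullet> a" using m(2)[of a] a by simp
  qed
qed

lemma norm_diff_le_of_inner_ge:
  fixes q u :: "'a::real_inner"
  assumes "norm q \<le> 1" "norm u = 1" "0 \<le> r" "1 - r\<^sup>2 / 2 \<le> u \<bullet> q"
  shows "norm (q - u) \<le> r"
proof (rule power2_le_imp_le)
  have "(norm (q - u))\<^sup>2 = (norm q)\<^sup>2 - 2 * (u \<bullet> q) + (norm u)\<^sup>2"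
    by (simp add: power2_norm_eq_inner inner_diff_left inner_diff_right inner_commute)
  also have "\<dots> \<le> 1 - 2 * (u \<bullet> q) + 1"
    using assms(1,2) by (simp add: power_le_one)
  also have "\<dots> \<le> r\<^sup>2" using assms(4) by simp
  finally show "(norm (q - u))\<^sup>2 \<le> r\<^sup>2" .
qed (use assms in auto)

lemma inner_pos_uniform_on_cap:
  fixes A :: "'a::real_inner set"
  assumes "finite A" "norm u = 1"
  obtains s g where "0 \<le> s" "s < 1" "0 < g"
    "\<And>q a. norm q \<le> 1 \<Longrightarrow> s \<le> u \<bullet> q \<Longrightarrow> a \<in> A \<Longrightarrow> 0 < u \<bullet> a \<Longrightarrow> g \<le> q \<bullet> a"
proof -
  obtain r g where r: "0 < r" and g: "0 < g"
    and near: "\<And>q a. norm (q - u) \<le> r \<Longrightarrow> a \<in> A \<Longrightarrow> 0 < u \<bullet> a \<Longrightarrow> g \<le> q \<bullet> a"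
    using inner_pos_uniform_near[OF assms(1)] by metis
  show ?thesis
  proof
    show "0 \<le> max 0 (1 - r\<^sup>2 / 2)" "max 0 (1 - r\<^sup>2 / 2) < 1" "0 < g" using r g by auto
    fix q a assume "norm q \<le> 1" "max 0 (1 - r\<^sup>2 / 2) \<le> u \<bullet> q" "a \<in> A" "0 < u \<bullet> a"
    then show "g \<le> q \<bullet> a" using assms(2) r by (intro near norm_diff_le_of_inner_ge) auto
  qed
qed

definition capped_ball :: "'a::real_inner set \<Rightarrow> ('a \<Rightarrow> real) \<Rightarrow> 'a set" where
  "capped_ball N t = cball 0 1 \<inter> (\<Inter>n\<in>N. {y. n \<bullet> y \<le> t n})"

lemma bounded_capped_ball: "bounded (capped_ball N t)"
  unfolding capped_ball_def by (rule bounded_Int) simp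

lemma convex_capped_ball: "convex (capped_ball N t)"
  unfolding capped_ball_def by (intro convex_Int convex_INT) (auto simp: convex_halfspace_le)

lemma compact_capped_ball:
  fixes N :: "'a::euclidean_space set"
  shows "compact (capped_ball N t)"
  unfolding capped_ball_def
  by (intro compact_Int_closed closed_INT) (auto simp: closed_halfspace_le)

lemma capped_ball_inside_smaller_ball:
  fixes t :: "'a::euclidean_space \<Rightarrow> real"
  assumes "\<And>u. norm u = 1 \<Longrightarrow> t u < 1"
  obtains N c where "finite N" "N \<subseteq> sphere 0 1" "c < 1" "capped_ball N t \<subseteq> cball 0 c"
proof -
  have "sphere 0 1 \<subseteq> (\<Union>u\<in>sphere 0 1. {y. t u < u \<bullet> y})"
  proof
    fix u :: 'a assume u: "u \<in> sphere 0 1"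
    then have "t u < u \<bullet> u" using assms by (simp add: dot_square_norm)
    then show "u \<in> (\<Union>u\<in>sphere 0 1. {y. t u < u \<bullet> y})" using u by blast
  qed
  then obtain N where N: "N \<subseteq> sphere 0 1" "finite N" "sphere 0 1 \<subseteq> (\<Union>n\<in>N. {y. t n < n \<bullet> y})"
    by (rule compactE_image[OF compact_sphere open_halfspace_gt])
  have off_sphere: "norm q < 1" if q: "q \<in> capped_ball N t" for q
  proof -
    have "norm q \<le> 1" "\<forall>n\<in>N. n \<bullet> q \<le> t n" using q unfolding capped_ball_def by auto
    moreover have "norm q \<noteq> 1"
    proof
      assume "norm q = 1"
      then obtain n where "n \<in> N" "t n < n \<bullet> q" using N(3) by auto
      with \<open>\<forall>n\<in>N. n \<bullet> q \<le> t n\<close> show False by fastforce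
    qed
    ultimately show ?thesis by simp
  qed
  show ?thesis
  proof (cases "capped_ball N t = {}")
    case True
    then show ?thesis using that[OF N(2,1), of 0] by simp
  next
    case False
    then obtain q0 where q0: "q0 \<in> capped_ball N t" "\<And>q. q \<in> capped_ball N t \<Longrightarrow> norm q \<le> norm q0"
      using continuous_attains_sup[OF compact_capped_ball _ continuous_on_norm_id] by blast
    show ?thesis by (rule that[OF N(2,1) off_sphere[OF q0(1)]]) (use q0(2) in auto)
  qed
qed

lemma capped_ball_add_mem:
  fixes q e :: "'a::real_inner"
  assumes q: "q \<in> capped_ball N t" and inside: "capped_ball N t \<subseteq> cball 0 c"
    and N: "N \<subseteq> sphere 0 1"
    and small: "norm e \<le> 1 - c" "\<And>n. n \<in> N \<Longrightarrow> norm e \<le> t n - s n"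
    and off_cap: "\<And>n. n \<in> N \<Longrightarrow> 0 < n \<bullet> e \<Longrightarrow> n \<bullet> q < s n"
  shows "q + e \<in> capped_ball N t"
proof -
  have "norm (q + e) \<le> norm q + norm e" by (rule norm_triangle_ineq)
  also have "\<dots> \<le> 1" using q inside small(1) by auto
  finally have "norm (q + e) \<le> 1" .
  moreover have "n \<bullet> (q + e) \<le> t n" if n: "n \<in> N" for n
  proof (cases "0 < n \<bullet> e")
    case True
    have "n \<bullet> e \<le> norm e" using norm_cauchy_schwarz[of n e] n N by auto
    then show ?thesis using off_cap[OF n True] small(2)[OF n] by (simp add: inner_add_right)
  next
    case False
    moreover have "n \<bullet> q \<le> t n" using q n unfolding capped_ball_def by simp
    ultimately show ?thesis by (simp add: inner_add_right)
  qed
  ultimately show ?thesis unfolding capped_ball_def by simp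
qed

lemma capped_ball_eventually_translation_invariant:
  fixes A N :: "'a::real_inner set" and C :: real
  assumes "finite A" "finite N" "N \<subseteq> sphere 0 1"
    and inside: "c < 1" "capped_ball N t \<subseteq> cball 0 c"
    and gap: "\<And>n. n \<in> N \<Longrightarrow> s n < t n" and g: "\<And>n. n \<in> N \<Longrightarrow> 0 < g n"
    and cap: "\<And>n q a. n \<in> N \<Longrightarrow> norm q \<le> 1 \<Longrightarrow> s n \<le> n \<bullet> q \<Longrightarrow> a \<in> A \<Longrightarrow> 0 < n \<bullet> a \<Longrightarrow>
                g n \<le> q \<bullet> a"
  shows "\<forall>\<^sub>F \<rho> in at_top. \<forall>x\<in>(\<lambda>q. \<rho> *\<^sub>R q) ` capped_ball N t. \<forall>a\<in>A.
           x \<bullet> a \<le> C \<longrightarrow> x + a \<in> (\<lambda>q. \<rho> *\<^sub>R q) ` capped_ball N t"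
proof -
  obtain K where K: "0 < K" "\<And>a. a \<in> A \<Longrightarrow> norm a \<le> K"
    using finite_imp_bounded[OF assms(1)] bounded_pos by metis
  have "\<forall>\<^sub>F \<rho> in at_top. 0 < \<rho> \<and> K < \<rho> * (1 - c) \<and> (\<forall>n\<in>N. K < \<rho> * (t n - s n) \<and> C < \<rho> * g n)"
    using inside(1) gap g assms(2)
    by (intro eventually_conj eventually_ball_finite ballI eventually_less_mult_at_top
        eventually_gt_at_top) auto
  then show ?thesis
  proof eventually_elim
    case (elim \<rho>)
    show ?case
    proof (intro ballI impI)
      fix x a assume "x \<in> (\<lambda>q. \<rho> *\<^sub>R q) ` capped_ball N t" and a: "a \<in> A" "x \<bullet> a \<le> C"
      then obtain q where q: "q \<in> capped_ball N t" "x = \<rho> *\<^sub>R q" by auto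
      have "norm (a /\<^sub>R \<rho>) \<le> K / \<rho>" using K(2)[OF a(1)] elim by (simp add: field_simps)
      moreover have "n \<bullet> q < s n" if "n \<in> N" "0 < n \<bullet> (a /\<^sub>R \<rho>)" for n
      proof (rule ccontr)
        assume "\<not> n \<bullet> q < s n"
        then have "g n \<le> q \<bullet> a"
          using that q(1) a(1) elim by (intro cap) (auto simp: capped_ball_def zero_less_mult_iff)
        then have "C < x \<bullet> a" using elim that(1) q(2) by (fastforce intro: less_le_trans)
        then show False using a(2) by simp
      qed
      ultimately have "q + a /\<^sub>R \<rho> \<in> capped_ball N t"
        using elim by (intro capped_ball_add_mem[OF q(1) inside(2) assms(3)]) (auto simp: field_simps)
      moreover have "x + a = \<rho> *\<^sub>R (q + a /\<^sub>R \<rho>)" using q(2) elim by (simp add: algebra_simps)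
      ultimately show "x + a \<in> (\<lambda>q. \<rho> *\<^sub>R q) ` capped_ball N t" by blast
    qed
  qed
qed

lemma convex_body_eventually_translation_invariant:
  fixes A :: "'a::euclidean_space set" and C :: real
  assumes "finite A"
  obtains Q where "bounded Q" "convex Q" "0 \<in> Q"
    "\<forall>\<^sub>F \<rho> in at_top. \<forall>x\<in>(\<lambda>q. \<rho> *\<^sub>R q) ` Q. \<forall>a\<in>A.
       x \<bullet> a \<le> C \<longrightarrow> x + a \<in> (\<lambda>q. \<rho> *\<^sub>R q) ` Q"
proof -
  have "\<exists>s g. 0 \<le> s \<and> s < 1 \<and> 0 < g \<and>
          (\<forall>q a. norm q \<le> 1 \<longrightarrow> s \<le> u \<bullet> q \<longrightarrow> a \<in> A \<longrightarrow> 0 < u \<bullet> a \<longrightarrow> g \<le> q \<bullet> a)"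
    if "norm u = 1" for u
    by (rule inner_pos_uniform_on_cap[OF assms that]) blast
  then obtain s g where s: "\<And>u. norm u = 1 \<Longrightarrow> 0 \<le> s u \<and> s u < 1 \<and> 0 < g u"
    and cap: "\<And>u q a. norm u = 1 \<Longrightarrow> norm q \<le> 1 \<Longrightarrow> s u \<le> u \<bullet> q \<Longrightarrow> a \<in> A \<Longrightarrow> 0 < u \<bullet> a \<Longrightarrow>
                g u \<le> q \<bullet> a"
    by metis
  define t where "t u = (1 + s u) / 2" for u
  have "t u < 1" if "norm u = 1" for u using s[OF that] unfolding t_def by simp
  then obtain N c where N: "finite N" "N \<subseteq> sphere 0 1" and inside: "c < 1" "capped_ball N t \<subseteq> cball 0 c"
    by (rule capped_ball_inside_smaller_ball)
  show ?thesis
  proof (rule that[OF bounded_capped_ball convex_capped_ball])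
    show "0 \<in> capped_ball N t" using N(2) s unfolding capped_ball_def t_def by force
    have unit: "\<And>n. n \<in> N \<Longrightarrow> norm n = 1" using N(2) by auto
    show "\<forall>\<^sub>F \<rho> in at_top. \<forall>x\<in>(\<lambda>q. \<rho> *\<^sub>R q) ` capped_ball N t. \<forall>a\<in>A.
            x \<bullet> a \<le> C \<longrightarrow> x + a \<in> (\<lambda>q. \<rho> *\<^sub>R q) ` capped_ball N t"
    proof (rule capped_ball_eventually_translation_invariant[OF assms N inside, where s = s and g = g])
      show "s n < t n" "0 < g n" if "n \<in> N" for n using s[OF unit[OF that]] unfolding t_def by auto
      show "g n \<le> q \<bullet> a"
        if "n \<in> N" "norm q \<le> 1" "s n \<le> n \<bullet> q" "a \<in> A" "0 < n \<bullet> a" for n q a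
        using cap[OF unit[OF that(1)] that(2-)] .
    qed
  qed
qed

lemma inner_diff_le_of_dist_le:
  fixes x y w :: "'a::real_inner"
  assumes "dist x y \<le> dist x w"
  shows "2 * (x \<bullet> (w - y)) \<le> (norm w)\<^sup>2 - (norm y)\<^sup>2"
proof -
  have "(norm (x - y))\<^sup>2 \<le> (norm (x - w))\<^sup>2" using assms by (simp add: dist_norm power_mono)
  then show ?thesis by (simp add: power2_norm_eq_inner inner_diff_left inner_diff_right inner_commute)
qed

lemma phi_map_image_subset_of_vertex_moves:
  fixes P S :: "'a::euclidean_space set"
  assumes "polytope P" "\<gamma> \<in> P" "convex S"
    and "\<And>x w. x \<in> S \<Longrightarrow> w extreme_point_of P \<Longrightarrow> x + (w - v x) \<in> S"
  shows "phi_map v \<gamma> ` S \<subseteq> S"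
proof
  fix z assume "z \<in> phi_map v \<gamma> ` S"
  then obtain x where x: "x \<in> S" and z: "z = x + (\<gamma> - v x)" unfolding phi_map_def by auto
  define T where "T = (+) (v x - x) ` S"
  have "{w. w extreme_point_of P} \<subseteq> T"
  proof
    fix w assume "w \<in> {w. w extreme_point_of P}"
    then have "x + (w - v x) \<in> S" using assms(4) x by blast
    then show "w \<in> T" unfolding T_def by (rule rev_image_eqI) simp
  qed
  then have "convex hull {w. w extreme_point_of P} \<subseteq> T"
    using convex_translation[OF assms(3)] unfolding T_def by (rule hull_minimal)
  moreover have "P = convex hull {w. w extreme_point_of P}"
    using assms(1) by (simp add: Krein_Milman_Minkowski polytope_imp_compact polytope_imp_convex)
  ultimately have "\<gamma> \<in> T" using assms(2) by blast
  then show "z \<in> S" unfolding T_def z by (auto simp: algebra_simps)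
qed

lemma phi_map_scaled_eventually_invariant:
  fixes P Q A :: "'a::euclidean_space set"
  assumes "polytope P" "closest_vertex_choice P v" "convex Q"
    and diff: "\<And>w w'. w extreme_point_of P \<Longrightarrow> w' extreme_point_of P \<Longrightarrow> w - w' \<in> A"
    and bound: "\<And>w. w extreme_point_of P \<Longrightarrow> norm w \<le> B"
    and "\<forall>\<^sub>F \<rho> in at_top. \<forall>x\<in>(\<lambda>q. \<rho> *\<^sub>R q) ` Q. \<forall>a\<in>A.
           x \<bullet> a \<le> B\<^sup>2 / 2 \<longrightarrow> x + a \<in> (\<lambda>q. \<rho> *\<^sub>R q) ` Q"
  shows "\<forall>\<^sub>F \<rho> in at_top. \<forall>\<gamma>\<in>P. phi_map v \<gamma> ` ((\<lambda>q. \<rho> *\<^sub>R q) ` Q) \<subseteq> (\<lambda>q. \<rho> *\<^sub>R q) ` Q"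
  using assms(6)
proof eventually_elim
  case (elim \<rho>)
  show ?case
  proof (intro ballI phi_map_image_subset_of_vertex_moves)
    show "polytope P" by (fact assms(1))
    show "convex ((\<lambda>q. \<rho> *\<^sub>R q) ` Q)" using assms(3) by (rule convex_scaling)
    fix x w assume x: "x \<in> (\<lambda>q. \<rho> *\<^sub>R q) ` Q" and w: "w extreme_point_of P"
    have vx: "v x extreme_point_of P" "dist x (v x) \<le> dist x w"
      using assms(2) w unfolding closest_vertex_choice_def by auto
    have "2 * (x \<bullet> (w - v x)) \<le> (norm w)\<^sup>2 - (norm (v x))\<^sup>2"
      using vx(2) by (rule inner_diff_le_of_dist_le)
    moreover have "(norm w)\<^sup>2 \<le> B\<^sup>2" using bound[OF w] by (simp add: power_mono)
    ultimately have "x \<bullet> (w - v x) \<le> B\<^sup>2 / 2" using zero_le_power2[of "norm (v x)"] by linarith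
    then show "x + (w - v x) \<in> (\<lambda>q. \<rho> *\<^sub>R q) ` Q"
      using elim x diff[OF w vx(1)] by blast
  qed
qed

theorem theorem6p2:
  fixes L :: nat and P :: "nat \<Rightarrow> 'a::euclidean_space set" and v :: "nat \<Rightarrow> 'a \<Rightarrow> 'a"
  assumes "\<forall>j\<in>{1..L}. polytope (P j)"
    and "\<forall>j\<in>{1..L}. closest_vertex_choice (P j) (v j)"
  shows "\<exists>Q::'a set. bounded Q \<and> convex Q \<and> Q \<noteq> {} \<and>
     (\<forall>j\<in>{1..L}. \<exists>\<rho>j>0. \<forall>\<gamma>\<in>P j. \<forall>\<rho>\<ge>\<rho>j.
         phi_map (v j) \<gamma> ` ((\<lambda>q. \<rho> *\<^sub>R q) ` Q) \<subseteq> (\<lambda>q. \<rho> *\<^sub>R q) ` Q)"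
proof -
  define V where "V = (\<Union>j\<in>{1..L}. {w. w extreme_point_of P j})"
  have "finite V"
    unfolding V_def using assms(1)
    by (auto intro: finite_polyhedron_extreme_points polytope_imp_polyhedron)
  have vertex: "w \<in> V" if "j \<in> {1..L}" "w extreme_point_of P j" for j w
    unfolding V_def using that by blast
  obtain B where B: "\<And>w. w \<in> V \<Longrightarrow> norm w \<le> B"
    using \<open>finite V\<close> finite_imp_bounded bounded_iff by metis
  define A where "A = (\<lambda>(w, w'). w - w') ` (V \<times> V)"
  have diff: "w - w' \<in> A" if "w \<in> V" "w' \<in> V" for w w' using that unfolding A_def by force
  have "finite A" unfolding A_def using \<open>finite V\<close> by simp
  then obtain Q where Q: "bounded Q" "convex Q" "0 \<in> Q"
    and "\<forall>\<^sub>F \<rho> in at_top. \<forall>x\<in>(\<lambda>q. \<rho> *\<^sub>R q) ` Q. \<forall>a\<in>A.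
           x \<bullet> a \<le> B\<^sup>2 / 2 \<longrightarrow> x + a \<in> (\<lambda>q. \<rho> *\<^sub>R q) ` Q"
    by (rule convex_body_eventually_translation_invariant)
  then have "\<forall>\<^sub>F \<rho> in at_top. \<forall>\<gamma>\<in>P j.
               phi_map (v j) \<gamma> ` ((\<lambda>q. \<rho> *\<^sub>R q) ` Q) \<subseteq> (\<lambda>q. \<rho> *\<^sub>R q) ` Q"
    if "j \<in> {1..L}" for j
    using assms that
    by (intro phi_map_scaled_eventually_invariant[where A = A and B = B])
       (blast intro: B diff vertex)+
  then have "\<exists>\<rho>j>0. \<forall>\<gamma>\<in>P j. \<forall>\<rho>\<ge>\<rho>j.
               phi_map (v j) \<gamma> ` ((\<lambda>q. \<rho> *\<^sub>R q) ` Q) \<subseteq> (\<lambda>q. \<rho> *\<^sub>R q) ` Q"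
    if "j \<in> {1..L}" for j
    using that unfolding eventually_at_top_pos_threshold by fast
  then show ?thesis using Q by (intro exI[of _ Q] conjI ballI) auto
qed

end
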